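(* Let $X$ be a quandle, $A$ an abelian group, and $\varphi:X\times X\to A$ a quandle 2-cocycle. Let $E=X\times_\varphi A$ be the abelian extension with operation $(x,a)\star(y,b)=(x*y,\ a+\varphi(x,y))$, and $\pi:E\to X$ the projection $(x,a)\mapsto x$. Then there is a cochain map $\kappa^*:C_b^*(E,\mathbb R)\to C_b^*(X,\mathbb R)$ with $\|\kappa^n f\|_\infty\le\|f\|_\infty$ and $\kappa^n\circ\pi^n_b=\mathrm{id}$ for all $n\ge1$, where $\pi^n_b f=f\circ\pi^{\times n}$. Consequently, the induced map $\pi_b^*:H_b^n(X,\mathbb R)\to H_b^n(E,\mathbb R)$ is injective for every $n\ge1$.
   Context: A quandle 2-cocycle with values in an abelian group $A$ is a map $\varphi:X\times X\to A$ with $\varphi(x,x)=0$ and $\varphi(x,y)+\varphi(x*y,z)=\varphi(x,z)+\varphi(x*z,y*z)$ for all $x,y,z\in X$; then $E=X\times_\varphi A$ is a quandle. For a quandle (or rack) $Y$, $C_b^n(Y,\mathbb R)$ is the space of bounded maps $Y^n\to\mathbb R$ ($Y^0$ a point), with coboundary $\delta f(y_1,\dots,y_n)=\sum_{i=2}^n(-1)^i\big(f(y_1,\dots,\widehat{y_i},\dots,y_n)-f(y_1*y_i,\dots,y_{i-1}*y_i,y_{i+1},\dots,y_n)\big)$; $H_b^n(Y,\mathbb R)$ is the cohomology of this complex. (Abelian groups admit a left-invariant mean, i.e. a positive, normalized, translation-invariant linear functional on bounded real functions.) *)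

theory Defs
  imports Complex_Main
begin

text \<open>Quandles/racks are modelled on a type with a binary operation q, q x y = x * y.\<close>

definition rack :: "('y \<Rightarrow> 'y \<Rightarrow> 'y) \<Rightarrow> bool" where
  "rack q \<longleftrightarrow> (\<forall>y. bij (\<lambda>x. q x y)) \<and> (\<forall>x y z. q (q x y) z = q (q x z) (q y z))"

definition quandle :: "('y \<Rightarrow> 'y \<Rightarrow> 'y) \<Rightarrow> bool" where
  "quandle q \<longleftrightarrow> (\<forall>x. q x x = x) \<and> rack q"

definition quandle_2cocycle ::
  "('x \<Rightarrow> 'x \<Rightarrow> 'x) \<Rightarrow> ('x \<Rightarrow> 'x \<Rightarrow> 'a::ab_group_add) \<Rightarrow> bool" where
  "quandle_2cocycle q \<phi> \<longleftrightarrow> (\<forall>x. \<phi> x x = 0) \<and>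
     (\<forall>x y z. \<phi> x y + \<phi> (q x y) z = \<phi> x z + \<phi> (q x z) (q y z))"

definition ext_op ::
  "('x \<Rightarrow> 'x \<Rightarrow> 'x) \<Rightarrow> ('x \<Rightarrow> 'x \<Rightarrow> 'a::ab_group_add) \<Rightarrow> ('x \<times> 'a) \<Rightarrow> ('x \<times> 'a) \<Rightarrow> ('x \<times> 'a)" where
  "ext_op q \<phi> u v = (q (fst u) (fst v), snd u + \<phi> (fst u) (fst v))"

text \<open>n-cochains: maps Y^n \<rightarrow> R, encoded as functions on lists, supported on lists of
  length n (value 0 elsewhere), bounded on lists of length n.\<close>
definition Cb :: "nat \<Rightarrow> ('y list \<Rightarrow> real) set" where
  "Cb n = {f. (\<exists>B. \<forall>ys. length ys = n \<longrightarrow> \<bar>f ys\<bar> \<le> B) \<and> (\<forall>ys. length ys \<noteq> n \<longrightarrow> f ys = 0)}"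

text \<open>Coboundary C^n \<rightarrow> C^(n+1). For a list ys = [y_1,...,y_(n+1)] the paper's index i
  (2..n+1) corresponds to the 0-based position i-1 (1..n).\<close>
definition cob :: "('y \<Rightarrow> 'y \<Rightarrow> 'y) \<Rightarrow> nat \<Rightarrow> ('y list \<Rightarrow> real) \<Rightarrow> ('y list \<Rightarrow> real)" where
  "cob q n f = (\<lambda>ys. if length ys = Suc n then
      (\<Sum>i\<in>{1..n}. (-1) ^ (Suc i) *
         (f (take i ys @ drop (Suc i) ys)
          - f (map (\<lambda>y. q y (ys ! i)) (take i ys) @ drop (Suc i) ys)))
     else 0)"

definition supnorm :: "nat \<Rightarrow> ('y list \<Rightarrow> real) \<Rightarrow> real" where
  "supnorm n f = (SUP ys\<in>{ys. length ys = n}. \<bar>f ys\<bar>)"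

definition pib :: "nat \<Rightarrow> ('x list \<Rightarrow> real) \<Rightarrow> (('x \<times> 'a) list \<Rightarrow> real)" where
  "pib n f = (\<lambda>es. f (map fst es))"

definition Zb :: "('y \<Rightarrow> 'y \<Rightarrow> 'y) \<Rightarrow> nat \<Rightarrow> ('y list \<Rightarrow> real) set" where
  "Zb q n = {f \<in> Cb n. cob q n f = (\<lambda>_. 0)}"

definition Bb :: "('y \<Rightarrow> 'y \<Rightarrow> 'y) \<Rightarrow> nat \<Rightarrow> ('y list \<Rightarrow> real) set" where
  "Bb q n = (case n of 0 \<Rightarrow> {\<lambda>_. 0} | Suc m \<Rightarrow> cob q m ` Cb m)"

text \<open>Two cocycles define the same class in H_b^n iff they are cohomologous.\<close>
definition cohomologous :: "('y \<Rightarrow> 'y \<Rightarrow> 'y) \<Rightarrow> nat \<Rightarrow> ('y list \<Rightarrow> real) \<Rightarrow> ('y list \<Rightarrow> real) \<Rightarrow> bool" where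
  "cohomologous q n f g \<longleftrightarrow> (\<lambda>ys. f ys - g ys) \<in> Bb q n"

end

theory Submission
  imports Defs
begin

text \<open>An abelian group \<open>A\<close> carries an invariant mean \<open>m\<close>: a linear functional on bounded
  real functions with \<open>\<bar>m f\<bar> \<le> sup \<bar>f\<bar>\<close>, \<open>m 1 = 1\<close> and \<open>m (f (_ + t)) = m f\<close>. Following Day, the
  infimum over finite lists \<open>ts\<close> of \<open>sup\<^sub>x\<close> of the average of \<open>f\<close> over \<open>x + ts\<close> is sublinear
  (commutativity lets two such averages be merged into one over \<open>ts + ss\<close>), telescoping makes it
  non-positive on \<open>f - f (_ + t)\<close>, and any linear functional below it, which Hahn-Banach provides,
  is an invariant mean.

  \<open>\<kappa>\<^sup>n\<close> averages a cochain on \<open>E\<^sup>n\<close> with \<open>m\<close> over the fibre coordinates \<open>(a\<^sub>1, \<dots>, a\<^sub>n) \<in> A\<^sup>n\<close>. It commutes with the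
  coboundaries because the \<open>i\<close>-th face of \<open>\<delta>\<close> on \<open>E\<close> only deletes the \<open>i\<close>-th fibre coordinate and
  translates the earlier ones by \<open>\<phi>(x\<^sub>j, x\<^sub>i)\<close>, and \<open>m\<close> sees neither. So \<open>\<kappa>\<close> maps bounded
  coboundaries to bounded coboundaries, and \<open>\<kappa>\<^sup>n \<circ> \<pi>\<^sub>b\<^sup>n = id\<close> makes \<open>\<pi>\<^sub>b\<^sup>*\<close> injective.\<close>

section \<open>Dominated extension of linear functionals\<close>

locale sublinear_functional =
  fixes S :: "('b \<Rightarrow> real) set" and p :: "('b \<Rightarrow> real) \<Rightarrow> real"
  assumes zero_mem: "(\<lambda>_. 0) \<in> S"
    and add_mem: "f \<in> S \<Longrightarrow> g \<in> S \<Longrightarrow> (\<lambda>x. f x + g x) \<in> S"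
    and scale_mem: "f \<in> S \<Longrightarrow> (\<lambda>x. c * f x) \<in> S"
    and subadditive: "f \<in> S \<Longrightarrow> g \<in> S \<Longrightarrow> p (\<lambda>x. f x + g x) \<le> p f + p g"
    and positive_homogeneous: "f \<in> S \<Longrightarrow> c > 0 \<Longrightarrow> p (\<lambda>x. c * f x) = c * p f"
begin

lemma diff_mem: "f \<in> S \<Longrightarrow> g \<in> S \<Longrightarrow> (\<lambda>x. f x - g x) \<in> S"
  using add_mem[OF _ scale_mem, of f g "-1"] by simp

lemma p_eq_scaled:
  assumes "f \<in> S" and "c > 0"
  shows "p f = c * p (\<lambda>x. f x / c)"
proof -
  have "(\<lambda>x. f x / c) \<in> S"
    using scale_mem[OF assms(1), of "1 / c"] by simp
  from positive_homogeneous[OF this assms(2)] show ?thesis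
    using assms(2) by simp
qed

text \<open>Partial linear functionals below \<open>p\<close> are represented by their graphs, so that
  Zorn's lemma can be applied to the inclusion order.\<close>

definition dominated_linear_graph :: "(('b \<Rightarrow> real) \<times> real) set \<Rightarrow> bool" where
  "dominated_linear_graph G \<longleftrightarrow> G \<noteq> {}
     \<and> (\<forall>f a. (f, a) \<in> G \<longrightarrow> f \<in> S \<and> a \<le> p f)
     \<and> (\<forall>f a g b. (f, a) \<in> G \<longrightarrow> (g, b) \<in> G \<longrightarrow> ((\<lambda>x. f x + g x), a + b) \<in> G)
     \<and> (\<forall>f a c. (f, a) \<in> G \<longrightarrow> ((\<lambda>x. c * f x), c * a) \<in> G)
     \<and> (\<forall>f a b. (f, a) \<in> G \<longrightarrow> (f, b) \<in> G \<longrightarrow> a = b)"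

lemma dominated_linear_graph_Union:
  assumes "C \<in> chains {G. dominated_linear_graph G}" and "C \<noteq> {}"
  shows "dominated_linear_graph (\<Union>C)"
proof -
  have graphs: "\<And>G. G \<in> C \<Longrightarrow> dominated_linear_graph G"
    and chain: "\<And>G H. G \<in> C \<Longrightarrow> H \<in> C \<Longrightarrow> G \<subseteq> H \<or> H \<subseteq> G"
    using assms(1) unfolding chains_def chain_subset_def by auto
  have common: "\<exists>G\<in>C. u \<in> G \<and> v \<in> G" if "u \<in> \<Union>C" "v \<in> \<Union>C" for u v
    using that chain by blast
  show ?thesis
    unfolding dominated_linear_graph_def
  proof (intro conjI allI impI)
    show "\<Union>C \<noteq> {}"
      using assms(2) graphs unfolding dominated_linear_graph_def by blast
  next
    fix f a assume "(f, a) \<in> \<Union>C"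
    then show "f \<in> S" "a \<le> p f"
      using graphs unfolding dominated_linear_graph_def by blast+
  next
    fix f a c assume "(f, a) \<in> \<Union>C"
    then show "((\<lambda>x. c * f x), c * a) \<in> \<Union>C"
      using graphs unfolding dominated_linear_graph_def by blast
  next
    fix f a g b assume "(f, a) \<in> \<Union>C" "(g, b) \<in> \<Union>C"
    then obtain G where "G \<in> C" "(f, a) \<in> G" "(g, b) \<in> G"
      using common by blast
    with graphs show "((\<lambda>x. f x + g x), a + b) \<in> \<Union>C"
      unfolding dominated_linear_graph_def by blast
  next
    fix f a b assume "(f, a) \<in> \<Union>C" "(f, b) \<in> \<Union>C"
    then obtain G where "G \<in> C" "(f, a) \<in> G" "(f, b) \<in> G"
      using common by blast
    with graphs show "a = b"
      unfolding dominated_linear_graph_def by blast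
  qed
qed

lemma
  assumes "dominated_linear_graph G"
  shows graph_nonempty: "G \<noteq> {}"
    and graph_mem: "(f, a) \<in> G \<Longrightarrow> f \<in> S"
    and graph_le: "(f, a) \<in> G \<Longrightarrow> a \<le> p f"
    and graph_add: "(f, a) \<in> G \<Longrightarrow> (g, b) \<in> G \<Longrightarrow> ((\<lambda>x. f x + g x), a + b) \<in> G"
    and graph_scale: "(f, a) \<in> G \<Longrightarrow> ((\<lambda>x. c * f x), c * a) \<in> G"
    and graph_functional: "(f, a) \<in> G \<Longrightarrow> (f, b) \<in> G \<Longrightarrow> a = b"
  using assms unfolding dominated_linear_graph_def by blast+

lemma graph_zero: "dominated_linear_graph G \<Longrightarrow> ((\<lambda>_. 0), 0) \<in> G"
  using graph_nonempty graph_scale[of G _ _ 0] by fastforce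

lemma graph_lower_le_upper:
  assumes G: "dominated_linear_graph G" and f0: "f0 \<in> S"
    and gb: "(g, b) \<in> G" and hd: "(h, d) \<in> G"
  shows "b - p (\<lambda>x. g x - f0 x) \<le> p (\<lambda>x. h x + f0 x) - d"
proof -
  have "b + d \<le> p (\<lambda>x. g x + h x)"
    using graph_le[OF G graph_add[OF G gb hd]] .
  also have "(\<lambda>x. g x + h x) = (\<lambda>x. (g x - f0 x) + (h x + f0 x))"
    by simp
  also have "p \<dots> \<le> p (\<lambda>x. g x - f0 x) + p (\<lambda>x. h x + f0 x)"
    using graph_mem[OF G] gb hd f0 by (intro subadditive diff_mem add_mem)
  finally show ?thesis by simp
qed

lemma separating_value_exists:
  assumes G: "dominated_linear_graph G" and f0: "f0 \<in> S"
  obtains a0 where "\<And>g b. (g, b) \<in> G \<Longrightarrow> b - p (\<lambda>x. g x - f0 x) \<le> a0"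
    and "\<And>h d. (h, d) \<in> G \<Longrightarrow> a0 \<le> p (\<lambda>x. h x + f0 x) - d"
proof
  let ?Lo = "{b - p (\<lambda>x. g x - f0 x) | g b. (g, b) \<in> G}"
  have bdd: "bdd_above ?Lo"
    using graph_lower_le_upper[OF G f0 _ graph_zero[OF G]] by (intro bdd_aboveI[of _ "p f0"]) auto
  show "b - p (\<lambda>x. g x - f0 x) \<le> Sup ?Lo" if "(g, b) \<in> G" for g b
    using that by (intro cSup_upper[OF _ bdd]) auto
  show "Sup ?Lo \<le> p (\<lambda>x. h x + f0 x) - d" if "(h, d) \<in> G" for h d
    using that graph_zero[OF G] graph_lower_le_upper[OF G f0]
    by (intro cSup_least) auto
qed

lemma separating_value_dominates:
  assumes G: "dominated_linear_graph G" and f0: "f0 \<in> S"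
    and lower: "\<And>g b. (g, b) \<in> G \<Longrightarrow> b - p (\<lambda>x. g x - f0 x) \<le> a0"
    and upper: "\<And>h d. (h, d) \<in> G \<Longrightarrow> a0 \<le> p (\<lambda>x. h x + f0 x) - d"
    and gb: "(g, b) \<in> G"
  shows "b + c * a0 \<le> p (\<lambda>x. g x + c * f0 x)"
proof -
  have gc: "(\<lambda>x. g x + c * f0 x) \<in> S"
    using graph_mem[OF G gb] f0 by (intro add_mem scale_mem)
  consider "c = 0" | "c > 0" | "c < 0" by linarith
  then show ?thesis
  proof cases
    case 1
    then show ?thesis using graph_le[OF G gb] by simp
  next
    case 2
    have "a0 \<le> p (\<lambda>x. g x / c + f0 x) - b / c"
      using upper[OF graph_scale[OF G gb, of "1 / c"]] by simp
    then have "b + c * a0 \<le> c * p (\<lambda>x. g x / c + f0 x)"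
      using 2 by (simp add: field_simps)
    also have "\<dots> = p (\<lambda>x. g x + c * f0 x)"
      using p_eq_scaled[OF gc 2] 2 by (simp add: add_divide_distrib)
    finally show ?thesis .
  next
    case 3
    have "- b / c - p (\<lambda>x. - g x / c - f0 x) \<le> a0"
      using lower[OF graph_scale[OF G gb, of "- 1 / c"]] by simp
    then have "b + c * a0 \<le> - c * p (\<lambda>x. - g x / c - f0 x)"
      using 3 by (simp add: field_simps)
    also have "(\<lambda>x. - g x / c - f0 x) = (\<lambda>x. (g x + c * f0 x) / - c)"
      using 3 by (intro ext) (simp add: field_simps)
    also have "- c * p \<dots> = p (\<lambda>x. g x + c * f0 x)"
      using p_eq_scaled[OF gc, of "- c"] 3 by simp
    finally show ?thesis .
  qed
qed

definition extend_graph ::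
    "(('b \<Rightarrow> real) \<times> real) set \<Rightarrow> ('b \<Rightarrow> real) \<Rightarrow> real \<Rightarrow> (('b \<Rightarrow> real) \<times> real) set" where
  "extend_graph G f0 a0 = {((\<lambda>x. g x + c * f0 x), b + c * a0) | g b c. (g, b) \<in> G}"

lemma extend_graph_memI:
  "(g, b) \<in> G \<Longrightarrow> ((\<lambda>x. g x + c * f0 x), b + c * a0) \<in> extend_graph G f0 a0"
  unfolding extend_graph_def by blast

lemma extend_graph_memE:
  assumes "(f, a) \<in> extend_graph G f0 a0"
  obtains g b c where "(g, b) \<in> G" "f = (\<lambda>x. g x + c * f0 x)" "a = b + c * a0"
  using assms unfolding extend_graph_def by blast

lemma subset_extend_graph: "G \<subseteq> extend_graph G f0 a0"
  using extend_graph_memI[of _ _ G 0] by force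

lemma extend_graph_mem_new: "dominated_linear_graph G \<Longrightarrow> (f0, a0) \<in> extend_graph G f0 a0"
  using extend_graph_memI[OF graph_zero, of G 1] by simp

lemma extend_graph_functional:
  assumes G: "dominated_linear_graph G" and new: "\<nexists>a. (f0, a) \<in> G"
    and gb: "(g, b) \<in> G" and hd: "(h, d) \<in> G"
    and eq: "(\<lambda>x. g x + c * f0 x) = (\<lambda>x. h x + e * f0 x)"
  shows "b + c * a0 = d + e * a0"
proof (cases "c = e")
  case True
  then have "g = h" using eq by (simp add: fun_eq_iff)
  then show ?thesis using True graph_functional[OF G gb] hd by blast
next
  case False
  \<comment> \<open>otherwise \<open>f0\<close> would be the quotient of \<open>g - h\<close> by \<open>e - c\<close>, which lies in the graph\<close>
  have "((\<lambda>x. (1 / (e - c)) * (g x + (-1) * h x)), (1 / (e - c)) * (b + (-1) * d)) \<in> G"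
    by (intro graph_scale[OF G] graph_add[OF G gb] graph_scale[OF G hd])
  moreover have "(\<lambda>x. (1 / (e - c)) * (g x + (-1) * h x)) = f0"
  proof
    fix x
    have "g x - h x = (e - c) * f0 x" using fun_cong[OF eq, of x] by (simp add: algebra_simps)
    then show "(1 / (e - c)) * (g x + (-1) * h x) = f0 x" using False by (simp add: field_simps)
  qed
  ultimately show ?thesis using new by auto
qed

lemma dominated_linear_graph_extend_graph:
  assumes G: "dominated_linear_graph G" and f0: "f0 \<in> S" and new: "\<nexists>a. (f0, a) \<in> G"
    and lower: "\<And>g b. (g, b) \<in> G \<Longrightarrow> b - p (\<lambda>x. g x - f0 x) \<le> a0"
    and upper: "\<And>h d. (h, d) \<in> G \<Longrightarrow> a0 \<le> p (\<lambda>x. h x + f0 x) - d"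
  shows "dominated_linear_graph (extend_graph G f0 a0)"
proof -
  let ?G' = "extend_graph G f0 a0"
  show ?thesis
    unfolding dominated_linear_graph_def
  proof (intro conjI allI impI)
    show "?G' \<noteq> {}" using extend_graph_mem_new[OF G] by blast
  next
    fix f a assume "(f, a) \<in> ?G'"
    then obtain g b c where "(g, b) \<in> G" "f = (\<lambda>x. g x + c * f0 x)" "a = b + c * a0"
      by (rule extend_graph_memE)
    then show "f \<in> S" "a \<le> p f"
      using separating_value_dominates[OF G f0 lower upper] graph_mem[OF G] f0
      by (auto intro: add_mem scale_mem)
  next
    fix f a f' a' assume "(f, a) \<in> ?G'" "(f', a') \<in> ?G'"
    moreover obtain g b c where "(g, b) \<in> G" "f = (\<lambda>x. g x + c * f0 x)" "a = b + c * a0"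
      using \<open>(f, a) \<in> ?G'\<close> by (rule extend_graph_memE)
    moreover obtain g' b' c' where "(g', b') \<in> G" "f' = (\<lambda>x. g' x + c' * f0 x)" "a' = b' + c' * a0"
      using \<open>(f', a') \<in> ?G'\<close> by (rule extend_graph_memE)
    ultimately show "((\<lambda>x. f x + f' x), a + a') \<in> ?G'"
      using extend_graph_memI[OF graph_add[OF G], of g b g' b' "c + c'" f0 a0]
      by (simp add: algebra_simps)
  next
    fix f a k assume "(f, a) \<in> ?G'"
    then obtain g b c where "(g, b) \<in> G" "f = (\<lambda>x. g x + c * f0 x)" "a = b + c * a0"
      by (rule extend_graph_memE)
    then show "((\<lambda>x. k * f x), k * a) \<in> ?G'"
      using extend_graph_memI[OF graph_scale[OF G], of g b k "k * c" f0 a0]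
      by (simp add: algebra_simps)
  next
    fix f a a' assume "(f, a) \<in> ?G'" "(f, a') \<in> ?G'"
    obtain g b c where gb: "(g, b) \<in> G" and f: "f = (\<lambda>x. g x + c * f0 x)" and a: "a = b + c * a0"
      using \<open>(f, a) \<in> ?G'\<close> by (rule extend_graph_memE)
    obtain g' b' c' where gb': "(g', b') \<in> G" and f': "f = (\<lambda>x. g' x + c' * f0 x)"
      and a': "a' = b' + c' * a0"
      using \<open>(f, a') \<in> ?G'\<close> by (rule extend_graph_memE)
    show "a = a'"
      using extend_graph_functional[OF G new gb gb'] f f' a a' by simp
  qed
qed

theorem dominated_linear_functional_exists:
  "\<exists>L. (\<forall>f\<in>S. \<forall>g\<in>S. L (\<lambda>x. f x + g x) = L f + L g)
     \<and> (\<forall>f\<in>S. \<forall>c. L (\<lambda>x. c * f x) = c * L f)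
     \<and> (\<forall>f\<in>S. L f \<le> p f)"
proof -
  have singleton: "dominated_linear_graph {((\<lambda>_. 0), 0)}"
    unfolding dominated_linear_graph_def using zero_mem positive_homogeneous[OF zero_mem, of 2]
    by auto
  have "\<forall>C \<in> chains {G. dominated_linear_graph G}. \<exists>U \<in> {G. dominated_linear_graph G}. \<forall>X\<in>C. X \<subseteq> U"
  proof
    fix C assume C: "C \<in> chains {G. dominated_linear_graph G}"
    show "\<exists>U \<in> {G. dominated_linear_graph G}. \<forall>X\<in>C. X \<subseteq> U"
    proof (cases "C = {}")
      case True
      then show ?thesis using singleton by blast
    next
      case False
      then show ?thesis using dominated_linear_graph_Union[OF C] by blast
    qed
  qed
  from Zorn_Lemma2[OF this] obtain M where M: "dominated_linear_graph M"
    and maximal: "\<And>G. dominated_linear_graph G \<Longrightarrow> M \<subseteq> G \<Longrightarrow> G = M"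
    by blast
  have total: "\<exists>a. (f, a) \<in> M" if f: "f \<in> S" for f
  proof (rule ccontr)
    assume new: "\<nexists>a. (f, a) \<in> M"
    obtain a0 where lower: "\<And>g b. (g, b) \<in> M \<Longrightarrow> b - p (\<lambda>x. g x - f x) \<le> a0"
      and upper: "\<And>h d. (h, d) \<in> M \<Longrightarrow> a0 \<le> p (\<lambda>x. h x + f x) - d"
      using separating_value_exists[OF M f] by blast
    have "dominated_linear_graph (extend_graph M f a0)"
      using dominated_linear_graph_extend_graph[OF M f new lower upper] .
    then have "extend_graph M f a0 = M" using maximal subset_extend_graph by blast
    then show False using new extend_graph_mem_new[OF M] by metis
  qed
  define L where "L f = (THE a. (f, a) \<in> M)" for f
  have L_eq: "L f = a" if "(f, a) \<in> M" for f a
    unfolding L_def using that graph_functional[OF M that] by blast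
  have L_mem: "(f, L f) \<in> M" if "f \<in> S" for f
    using total[OF that] L_eq by blast
  show ?thesis
    using L_eq[OF graph_add[OF M L_mem L_mem]] L_eq[OF graph_scale[OF M L_mem]]
      graph_le[OF M L_mem] by blast
qed

end

section \<open>Invariant means on abelian groups\<close>

definition bounded_fun :: "('b \<Rightarrow> real) \<Rightarrow> bool" where
  "bounded_fun f \<longleftrightarrow> (\<exists>B. \<forall>x. \<bar>f x\<bar> \<le> B)"

lemma bounded_funI: "(\<And>x. \<bar>f x\<bar> \<le> B) \<Longrightarrow> bounded_fun f"
  unfolding bounded_fun_def by blast

lemma bounded_fun_const: "bounded_fun (\<lambda>_. c)"
  by (rule bounded_funI[of _ "\<bar>c\<bar>"]) simp

lemma bounded_fun_comp: "bounded_fun f \<Longrightarrow> bounded_fun (\<lambda>x. f (g x))"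
  unfolding bounded_fun_def by blast

lemma bounded_fun_add:
  assumes "bounded_fun f" and "bounded_fun g"
  shows "bounded_fun (\<lambda>x. f x + g x)"
proof -
  obtain B C where "\<And>x. \<bar>f x\<bar> \<le> B" and "\<And>x. \<bar>g x\<bar> \<le> C"
    using assms unfolding bounded_fun_def by blast
  then have "\<bar>f x + g x\<bar> \<le> B + C" for x
    by (meson abs_triangle_ineq add_mono order_trans)
  then show ?thesis by (rule bounded_funI)
qed

lemma bounded_fun_scale:
  assumes "bounded_fun f"
  shows "bounded_fun (\<lambda>x. c * f x)"
proof -
  obtain B where "\<And>x. \<bar>f x\<bar> \<le> B"
    using assms unfolding bounded_fun_def by blast
  then have "\<bar>c * f x\<bar> \<le> \<bar>c\<bar> * B" for x
    by (simp add: abs_mult mult_left_mono)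
  then show ?thesis by (rule bounded_funI)
qed

lemma bounded_fun_uminus: "bounded_fun f \<Longrightarrow> bounded_fun (\<lambda>x. - f x)"
  using bounded_fun_scale[of f "-1"] by simp

lemma bounded_fun_diff: "bounded_fun f \<Longrightarrow> bounded_fun g \<Longrightarrow> bounded_fun (\<lambda>x. f x - g x)"
  using bounded_fun_add[OF _ bounded_fun_uminus, of f g] by simp

lemma bounded_fun_sum:
  "(\<And>i. i \<in> I \<Longrightarrow> bounded_fun (g i)) \<Longrightarrow> bounded_fun (\<lambda>x. \<Sum>i\<in>I. g i x)"
  by (induction I rule: infinite_finite_induct) (auto intro: bounded_fun_add bounded_fun_const)

definition shift_average :: "'a::ab_group_add list \<Rightarrow> ('a \<Rightarrow> real) \<Rightarrow> 'a \<Rightarrow> real" where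
  "shift_average ts f x = (\<Sum>t\<leftarrow>ts. f (x + t)) / length ts"

definition sup_shift_average :: "'a::ab_group_add list \<Rightarrow> ('a \<Rightarrow> real) \<Rightarrow> real" where
  "sup_shift_average ts f = (SUP x. shift_average ts f x)"

definition upper_mean :: "('a::ab_group_add \<Rightarrow> real) \<Rightarrow> real" where
  "upper_mean f = Inf {sup_shift_average ts f | ts. ts \<noteq> []}"

lemma shift_average_bounds:
  assumes "\<And>x. \<bar>f x\<bar> \<le> B" and "ts \<noteq> []"
  shows "\<bar>shift_average ts f x\<bar> \<le> B"
proof -
  have "\<bar>\<Sum>t\<leftarrow>ts. f (x + t)\<bar> \<le> (\<Sum>t\<leftarrow>ts. \<bar>f (x + t)\<bar>)"
    using sum_list_abs[of "map (\<lambda>t. f (x + t)) ts"] by (simp add: comp_def)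
  also have "\<dots> \<le> (\<Sum>t\<leftarrow>ts. B)"
    using assms(1) by (intro sum_list_mono)
  finally show ?thesis
    using assms(2) unfolding shift_average_def sum_list_triv by (simp add: field_simps)
qed

lemma shift_average_le_sup:
  assumes "bounded_fun f" and "ts \<noteq> []"
  shows "shift_average ts f x \<le> sup_shift_average ts f"
proof -
  obtain B where B: "\<And>x. \<bar>f x\<bar> \<le> B"
    using assms(1) unfolding bounded_fun_def by blast
  have "bdd_above (range (shift_average ts f))"
    using shift_average_bounds[OF B assms(2)] by (intro bdd_aboveI[of _ B]) (auto simp: abs_le_iff)
  then show ?thesis
    unfolding sup_shift_average_def by (rule cSUP_upper[rotated]) simp
qed

lemma sup_shift_average_least:
  "(\<And>x. shift_average ts f x \<le> c) \<Longrightarrow> sup_shift_average ts f \<le> c"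
  unfolding sup_shift_average_def by (rule cSUP_least) auto

lemma upper_mean_le:
  assumes "bounded_fun f" and "ts \<noteq> []"
  shows "upper_mean f \<le> sup_shift_average ts f"
proof -
  obtain B where B: "\<And>x. \<bar>f x\<bar> \<le> B"
    using assms(1) unfolding bounded_fun_def by blast
  have "- B \<le> sup_shift_average us f" if "us \<noteq> []" for us
    using shift_average_le_sup[OF assms(1) that, where x = 0] shift_average_bounds[of f B, OF B that, where x = 0]
    by linarith
  then have "bdd_below {sup_shift_average ts f | ts. ts \<noteq> []}"
    by (intro bdd_belowI[of _ "- B"]) auto
  then show ?thesis
    unfolding upper_mean_def by (rule cInf_lower[rotated]) (use assms(2) in auto)
qed

lemma upper_mean_greatest:
  "(\<And>ts. ts \<noteq> [] \<Longrightarrow> c \<le> sup_shift_average ts f) \<Longrightarrow> c \<le> upper_mean f"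
  unfolding upper_mean_def by (rule cInf_greatest) (auto intro!: exI[of _ "[0]"])

lemma upper_mean_le_sup:
  assumes "bounded_fun f" and "\<And>x. f x \<le> c"
  shows "upper_mean f \<le> c"
proof -
  have "upper_mean f \<le> sup_shift_average [0] f"
    using upper_mean_le[OF assms(1)] by simp
  also have "\<dots> \<le> c"
    using assms(2) by (intro sup_shift_average_least) (simp add: shift_average_def)
  finally show ?thesis .
qed

lemma sum_list_divide: "(\<Sum>x\<leftarrow>xs. f x / c) = (\<Sum>x\<leftarrow>xs. f x) / (c :: 'a::field)"
  by (induction xs) (simp_all add: add_divide_distrib)

lemma sum_list_map_swap:
  "(\<Sum>t\<leftarrow>ts. \<Sum>s\<leftarrow>ss. F t s) = (\<Sum>s\<leftarrow>ss. \<Sum>t\<leftarrow>ts. F t s :: 'a::comm_monoid_add)"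
  by (induction ts) (simp_all add: sum_list_addf)

lemma shift_average_sums:
  fixes ts ss :: "'a::ab_group_add list"
  assumes "ts \<noteq> []" and "ss \<noteq> []"
  shows "shift_average [t + s. t \<leftarrow> ts, s \<leftarrow> ss] f x = (\<Sum>t\<leftarrow>ts. shift_average ss f (x + t)) / length ts"
    and "shift_average [t + s. t \<leftarrow> ts, s \<leftarrow> ss] f x = (\<Sum>s\<leftarrow>ss. shift_average ts f (x + s)) / length ss"
proof -
  have sum: "(\<Sum>u\<leftarrow>[t + s. t \<leftarrow> ts, s \<leftarrow> ss]. h u) = (\<Sum>t\<leftarrow>ts. \<Sum>s\<leftarrow>ss. h (t + s))" for h :: "'a \<Rightarrow> real"
    by (induction ts) (simp_all add: comp_def)
  have len: "length [t + s. t \<leftarrow> ts, s \<leftarrow> ss] = length ts * length ss"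
    by (induction ts) simp_all
  show "shift_average [t + s. t \<leftarrow> ts, s \<leftarrow> ss] f x = (\<Sum>t\<leftarrow>ts. shift_average ss f (x + t)) / length ts"
    unfolding shift_average_def sum len
    by (simp add: add.assoc sum_list_divide)
  have "(\<Sum>t\<leftarrow>ts. \<Sum>s\<leftarrow>ss. f (x + (t + s))) = (\<Sum>s\<leftarrow>ss. \<Sum>t\<leftarrow>ts. f ((x + s) + t))"
    unfolding sum_list_map_swap[of _ ts] by (simp add: ac_simps)
  then show "shift_average [t + s. t \<leftarrow> ts, s \<leftarrow> ss] f x = (\<Sum>s\<leftarrow>ss. shift_average ts f (x + s)) / length ss"
    unfolding shift_average_def sum len by (simp add: sum_list_divide)
qed

lemma average_le:
  assumes "ss \<noteq> []" and "\<And>s. s \<in> set ss \<Longrightarrow> h s \<le> c"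
  shows "(\<Sum>s\<leftarrow>ss. h s) / length ss \<le> (c :: real)"
proof -
  have "(\<Sum>s\<leftarrow>ss. h s) \<le> (\<Sum>s\<leftarrow>ss. c)"
    using assms(2) by (rule sum_list_mono)
  then show ?thesis
    using assms(1) unfolding sum_list_triv by (simp add: field_simps)
qed

lemma upper_mean_add:
  assumes f: "bounded_fun f" and g: "bounded_fun g"
  shows "upper_mean (\<lambda>x. f x + g x) \<le> upper_mean f + upper_mean g"
proof -
  have fg: "bounded_fun (\<lambda>x. f x + g x)"
    using f g by (rule bounded_fun_add)
  have le: "upper_mean (\<lambda>x. f x + g x) \<le> sup_shift_average ts f + sup_shift_average ss g"
    if ts: "ts \<noteq> []" and ss: "ss \<noteq> []" for ts ss :: "'a list"
  proof -
    let ?us = "[t + s. t \<leftarrow> ts, s \<leftarrow> ss]"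
    have us: "?us \<noteq> []"
      using ts ss by (cases ts; cases ss) auto
    have "shift_average ?us (\<lambda>x. f x + g x) x \<le> sup_shift_average ts f + sup_shift_average ss g"
      for x
    proof -
      have "shift_average ?us (\<lambda>x. f x + g x) x = shift_average ?us f x + shift_average ?us g x"
        by (simp add: shift_average_def sum_list_addf add_divide_distrib)
      also have "shift_average ?us f x \<le> sup_shift_average ts f"
        unfolding shift_average_sums(2)[OF ts ss]
        using ss shift_average_le_sup[OF f ts] by (intro average_le)
      also have "shift_average ?us g x \<le> sup_shift_average ss g"
        unfolding shift_average_sums(1)[OF ts ss]
        using ts shift_average_le_sup[OF g ss] by (intro average_le)
      finally show ?thesis by simp
    qed
    then have "sup_shift_average ?us (\<lambda>x. f x + g x) \<le> sup_shift_average ts f + sup_shift_average ss g"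
      by (rule sup_shift_average_least)
    then show ?thesis
      using upper_mean_le[OF fg us] by linarith
  qed
  have "upper_mean (\<lambda>x. f x + g x) - sup_shift_average ss g \<le> upper_mean f" if "ss \<noteq> []" for ss
    using le[OF _ that] by (intro upper_mean_greatest) (simp add: algebra_simps)
  then have "upper_mean (\<lambda>x. f x + g x) - upper_mean f \<le> upper_mean g"
    by (intro upper_mean_greatest) (simp add: algebra_simps)
  then show ?thesis by simp
qed

lemma upper_mean_scale_le:
  assumes f: "bounded_fun f" and c: "c > 0"
  shows "upper_mean (\<lambda>x. c * f x) \<le> c * upper_mean f"
proof -
  have "upper_mean (\<lambda>x. c * f x) / c \<le> sup_shift_average ts f" if ts: "ts \<noteq> []" for ts
  proof -
    have "shift_average ts (\<lambda>x. c * f x) x \<le> c * sup_shift_average ts f" for x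
    proof -
      have "shift_average ts (\<lambda>x. c * f x) x = c * shift_average ts f x"
        by (simp add: shift_average_def sum_list_const_mult)
      also have "\<dots> \<le> c * sup_shift_average ts f"
        using shift_average_le_sup[OF f ts] c by simp
      finally show ?thesis .
    qed
    then have "sup_shift_average ts (\<lambda>x. c * f x) \<le> c * sup_shift_average ts f"
      by (rule sup_shift_average_least)
    then show ?thesis
      using upper_mean_le[OF bounded_fun_scale[OF f] ts, of c] c by (simp add: field_simps)
  qed
  then have "upper_mean (\<lambda>x. c * f x) / c \<le> upper_mean f"
    by (rule upper_mean_greatest)
  then show ?thesis
    using c by (simp add: field_simps)
qed

lemma upper_mean_scale:
  assumes f: "bounded_fun f" and c: "c > 0"
  shows "upper_mean (\<lambda>x. c * f x) = c * upper_mean f"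
proof (rule antisym)
  show "upper_mean (\<lambda>x. c * f x) \<le> c * upper_mean f"
    using f c by (rule upper_mean_scale_le)
  have "upper_mean (\<lambda>x. (1 / c) * (c * f x)) \<le> (1 / c) * upper_mean (\<lambda>x. c * f x)"
    using bounded_fun_scale[OF f] c by (intro upper_mean_scale_le) simp_all
  then show "c * upper_mean f \<le> upper_mean (\<lambda>x. c * f x)"
    using c by (simp add: field_simps)
qed

lemma sum_list_translate_telescope:
  fixes f :: "'a::ab_group_add \<Rightarrow> real"
  shows "(\<Sum>s\<leftarrow>map (\<lambda>k. \<Sum>i<k. t) [0..<N]. f (x + s) - f (x + s + t)) = f x - f (x + (\<Sum>i<N. t))"
  by (induction N) (simp_all add: add.assoc)

lemma upper_mean_translate_diff:
  assumes f: "bounded_fun f"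
  shows "upper_mean (\<lambda>x. f x - f (x + t)) \<le> 0"
proof (rule field_le_epsilon)
  fix e :: real assume e: "e > 0"
  obtain B where B: "\<And>x. \<bar>f x\<bar> \<le> B"
    using f unfolding bounded_fun_def by blast
  obtain N :: nat where N: "2 * B / e < N"
    using reals_Archimedean2 by blast
  have "0 \<le> 2 * B / e" using B[of 0] e by simp
  then have N_pos: "N > 0" using N by (cases N) auto
  define ts where "ts = map (\<lambda>k. \<Sum>i<k. t) [0..<N]"
  have ts: "ts \<noteq> []" using N_pos by (simp add: ts_def)
  have "shift_average ts (\<lambda>x. f x - f (x + t)) x \<le> e" for x
  proof -
    have "shift_average ts (\<lambda>x. f x - f (x + t)) x = (f x - f (x + (\<Sum>i<N. t))) / N"
      unfolding shift_average_def ts_def sum_list_translate_telescope[symmetric]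
      by (simp add: add.assoc)
    also have "\<dots> \<le> 2 * B / N"
      using B[of x] B[of "x + (\<Sum>i<N. t)"] by (intro divide_right_mono) (simp_all add: abs_le_iff)
    also have "\<dots> \<le> e"
      using N N_pos e by (simp add: field_simps)
    finally show ?thesis .
  qed
  then have "sup_shift_average ts (\<lambda>x. f x - f (x + t)) \<le> e"
    by (rule sup_shift_average_least)
  moreover have "bounded_fun (\<lambda>x. f x - f (x + t))"
    using bounded_fun_diff[OF f bounded_fun_comp[OF f]] .
  ultimately show "upper_mean (\<lambda>x. f x - f (x + t)) \<le> 0 + e"
    using upper_mean_le[OF _ ts, of "\<lambda>x. f x - f (x + t)"] by simp
qed

lemma sublinear_upper_mean: "sublinear_functional {f. bounded_fun f} upper_mean"
proof
  show "(\<lambda>_. 0) \<in> {f. bounded_fun f}"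
    by (simp add: bounded_fun_const)
qed (simp_all add: bounded_fun_add bounded_fun_scale upper_mean_add upper_mean_scale)

locale invariant_mean =
  fixes m :: "('a::ab_group_add \<Rightarrow> real) \<Rightarrow> real"
  assumes mean_add: "bounded_fun f \<Longrightarrow> bounded_fun g \<Longrightarrow> m (\<lambda>x. f x + g x) = m f + m g"
    and mean_scale: "bounded_fun f \<Longrightarrow> m (\<lambda>x. c * f x) = c * m f"
    and mean_abs_le: "(\<And>x. \<bar>f x\<bar> \<le> B) \<Longrightarrow> \<bar>m f\<bar> \<le> B"
    and mean_const: "m (\<lambda>_. c) = c"
    and mean_translate: "bounded_fun f \<Longrightarrow> m (\<lambda>x. f (x + t)) = m f"

lemma invariant_mean_if_dominated:
  fixes L :: "('a::ab_group_add \<Rightarrow> real) \<Rightarrow> real"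
  assumes L_add: "\<And>f g. bounded_fun f \<Longrightarrow> bounded_fun g \<Longrightarrow> L (\<lambda>x. f x + g x) = L f + L g"
    and L_scale: "\<And>f c. bounded_fun f \<Longrightarrow> L (\<lambda>x. c * f x) = c * L f"
    and L_le: "\<And>f. bounded_fun f \<Longrightarrow> L f \<le> upper_mean f"
  shows "invariant_mean L"
proof
  have L_neg: "L (\<lambda>x. - f x) = - L f" if "bounded_fun f" for f
    using L_scale[OF that, of "-1"] by simp
  have L_diff: "L (\<lambda>x. f x - g x) = L f - L g" if "bounded_fun f" "bounded_fun g" for f g
    using L_add[OF that(1) bounded_fun_uminus[OF that(2)]] L_neg[OF that(2)] by simp
  have L_le_sup: "L f \<le> c" if "bounded_fun f" "\<And>x. f x \<le> c" for f c
    using L_le[OF that(1)] upper_mean_le_sup[OF that] by linarith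
  show "L (\<lambda>x. f x + g x) = L f + L g" if "bounded_fun f" "bounded_fun g" for f g
    using that by (rule L_add)
  show "L (\<lambda>x. c * f x) = c * L f" if "bounded_fun f" for f c
    using that by (rule L_scale)
  show "\<bar>L f\<bar> \<le> B" if B: "\<And>x. \<bar>f x\<bar> \<le> B" for f B
  proof -
    have f: "bounded_fun f" using B by (rule bounded_funI)
    have "L f \<le> B" and "L (\<lambda>x. - f x) \<le> B"
      using B by (intro L_le_sup f bounded_fun_uminus; simp add: abs_le_iff)+
    then show ?thesis using L_neg[OF f] by simp
  qed
  show "L (\<lambda>_. c) = c" for c
  proof -
    have "L (\<lambda>_. c) \<le> c" and "L (\<lambda>_. - c) \<le> - c"
      by (simp_all add: L_le_sup bounded_fun_const)
    then show ?thesis using L_neg[OF bounded_fun_const, of c] by simp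
  qed
  have L_le_translate: "L f \<le> L (\<lambda>x. f (x + t))" if f: "bounded_fun f" for f t
  proof -
    have ft: "bounded_fun (\<lambda>x. f (x + t))"
      using f by (rule bounded_fun_comp)
    have "L f - L (\<lambda>x. f (x + t)) \<le> upper_mean (\<lambda>x. f x - f (x + t))"
      using L_le[OF bounded_fun_diff[OF f ft]] L_diff[OF f ft] by simp
    also have "\<dots> \<le> 0"
      using f by (rule upper_mean_translate_diff)
    finally show ?thesis by simp
  qed
  show "L (\<lambda>x. f (x + t)) = L f" if f: "bounded_fun f" for f t
    using L_le_translate[OF f, of t] L_le_translate[OF bounded_fun_uminus[OF f], of t]
      L_neg[OF f] L_neg[OF bounded_fun_comp[OF f]]
    by simp
qed

theorem invariant_mean_exists: "\<exists>m :: ('a::ab_group_add \<Rightarrow> real) \<Rightarrow> real. invariant_mean m"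
  using sublinear_functional.dominated_linear_functional_exists[OF sublinear_upper_mean]
  unfolding mem_Collect_eq by (blast intro: invariant_mean_if_dominated)

section \<open>Averaging over the fibres of an abelian extension\<close>

fun iterated_mean :: "(('a \<Rightarrow> real) \<Rightarrow> real) \<Rightarrow> nat \<Rightarrow> ('a list \<Rightarrow> real) \<Rightarrow> real" where
  "iterated_mean m 0 h = h []"
| "iterated_mean m (Suc n) h = m (\<lambda>t. iterated_mean m n (\<lambda>ts. h (t # ts)))"

text \<open>The paper's \<open>\<kappa>\<^sup>n\<close>: average over the fibre coordinates \<open>a\<^sub>1, \<dots>, a\<^sub>n\<close> of
  \<open>f ((x\<^sub>1, a\<^sub>1), \<dots>, (x\<^sub>n, a\<^sub>n))\<close>, one coordinate at a time.\<close>

definition fibre_mean ::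
    "(('a \<Rightarrow> real) \<Rightarrow> real) \<Rightarrow> nat \<Rightarrow> (('x \<times> 'a) list \<Rightarrow> real) \<Rightarrow> 'x list \<Rightarrow> real" where
  "fibre_mean m n f xs = (if length xs = n then iterated_mean m n (\<lambda>ts. f (zip xs ts)) else 0)"

lemma Cb_bounded_fun: "f \<in> Cb n \<Longrightarrow> bounded_fun f"
proof -
  assume "f \<in> Cb n"
  then obtain B where B: "\<And>ys. length ys = n \<Longrightarrow> \<bar>f ys\<bar> \<le> B"
    and zero: "\<And>ys. length ys \<noteq> n \<Longrightarrow> f ys = 0"
    unfolding Cb_def by blast
  have "\<bar>f ys\<bar> \<le> max B 0" for ys
    using B[of ys] zero[of ys] by (cases "length ys = n") auto
  then show ?thesis by (rule bounded_funI)
qed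

lemma Cb_diff:
  assumes "f \<in> Cb n" and "g \<in> Cb n"
  shows "(\<lambda>xs. f xs - g xs) \<in> Cb n"
proof -
  obtain B C where B: "\<And>ys. length ys = n \<Longrightarrow> \<bar>f ys\<bar> \<le> B"
    and C: "\<And>ys. length ys = n \<Longrightarrow> \<bar>g ys\<bar> \<le> C"
    using assms unfolding Cb_def by blast
  have "\<bar>f ys - g ys\<bar> \<le> B + C" if "length ys = n" for ys
    using B[OF that] C[OF that] by linarith
  then show ?thesis
    using assms unfolding Cb_def by auto
qed

lemma Cb_abs_le_supnorm:
  assumes "f \<in> Cb n"
  shows "\<bar>f ys\<bar> \<le> supnorm n f"
proof -
  obtain B where B: "\<And>ys. length ys = n \<Longrightarrow> \<bar>f ys\<bar> \<le> B"
    and zero: "\<And>ys. length ys \<noteq> n \<Longrightarrow> f ys = 0"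
    using assms unfolding Cb_def by blast
  have bdd: "bdd_above ((\<lambda>ys. \<bar>f ys\<bar>) ` {ys. length ys = n})"
    using B by (intro bdd_aboveI[where M = B]) auto
  have le: "\<bar>f ys\<bar> \<le> supnorm n f" if "length ys = n" for ys
    unfolding supnorm_def using that by (intro cSUP_upper[OF _ bdd]) simp
  show ?thesis
  proof (cases "length ys = n")
    case False
    then show ?thesis using le[of "replicate n undefined"] zero by simp
  qed (rule le)
qed

lemma zip_face_delete:
  fixes ts :: "'a::monoid_add list"
  assumes "length xs = Suc n" and "length ts = Suc n" and "i \<le> n"
  shows "zip (take i xs @ drop (Suc i) xs) (map2 (+) (take i ts) (replicate i 0) @ drop (Suc i) ts)
       = take i (zip xs ts) @ drop (Suc i) (zip xs ts)"
  by (rule nth_equalityI) (use assms in \<open>auto simp: nth_append min_def\<close>)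

text \<open>On fibre coordinates the \<open>i\<close>-th face of the extension is the translation by
  \<open>\<phi>(x\<^sub>j, x\<^sub>i)\<close> in the \<open>j\<close>-th coordinate for \<open>j < i\<close>; invariance of the mean absorbs it.\<close>

lemma zip_face_act:
  fixes \<phi> :: "'x \<Rightarrow> 'x \<Rightarrow> 'a::ab_group_add"
  assumes "length xs = Suc n" and "length ts = Suc n" and "i \<le> n"
  shows "zip (map (\<lambda>y. q y (xs ! i)) (take i xs) @ drop (Suc i) xs)
             (map2 (+) (take i ts) (map (\<lambda>x. \<phi> x (xs ! i)) (take i xs)) @ drop (Suc i) ts)
       = map (\<lambda>y. ext_op q \<phi> y (zip xs ts ! i)) (take i (zip xs ts)) @ drop (Suc i) (zip xs ts)"
  by (rule nth_equalityI) (use assms in \<open>auto simp: nth_append min_def ext_op_def add.commute\<close>)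

context invariant_mean
begin

lemma iterated_mean_abs_le: "(\<And>ts. \<bar>h ts\<bar> \<le> B) \<Longrightarrow> \<bar>iterated_mean m n h\<bar> \<le> B"
  by (induction n arbitrary: h) (simp_all add: mean_abs_le)

lemma bounded_fun_iterated_mean_Cons:
  assumes "bounded_fun h"
  shows "bounded_fun (\<lambda>t. iterated_mean m n (\<lambda>ts. h (t # ts)))"
proof -
  obtain B where "\<And>ts. \<bar>h ts\<bar> \<le> B"
    using assms unfolding bounded_fun_def by blast
  then show ?thesis
    by (intro bounded_funI iterated_mean_abs_le)
qed

lemma iterated_mean_cong:
  "(\<And>ts. length ts = n \<Longrightarrow> h ts = h' ts) \<Longrightarrow> iterated_mean m n h = iterated_mean m n h'"
proof (induction n arbitrary: h h')
  case (Suc n)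
  have "iterated_mean m n (\<lambda>ts. h (t # ts)) = iterated_mean m n (\<lambda>ts. h' (t # ts))" for t
    by (rule Suc.IH) (simp add: Suc.prems)
  then show ?case by simp
qed simp

lemma iterated_mean_const: "iterated_mean m n (\<lambda>_. c) = c"
  by (induction n) (simp_all add: mean_const)

lemma iterated_mean_add:
  "bounded_fun h \<Longrightarrow> bounded_fun g \<Longrightarrow>
    iterated_mean m n (\<lambda>ts. h ts + g ts) = iterated_mean m n h + iterated_mean m n g"
proof (induction n arbitrary: h g)
  case (Suc n)
  have "iterated_mean m n (\<lambda>ts. h (t # ts) + g (t # ts))
      = iterated_mean m n (\<lambda>ts. h (t # ts)) + iterated_mean m n (\<lambda>ts. g (t # ts))" for t
    using Suc.IH[OF bounded_fun_comp[OF Suc.prems(1)] bounded_fun_comp[OF Suc.prems(2)]] .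
  then show ?case
    using mean_add[OF bounded_fun_iterated_mean_Cons[OF Suc.prems(1)]
        bounded_fun_iterated_mean_Cons[OF Suc.prems(2)]]
    by simp
qed simp

lemma iterated_mean_scale:
  "bounded_fun h \<Longrightarrow> iterated_mean m n (\<lambda>ts. c * h ts) = c * iterated_mean m n h"
proof (induction n arbitrary: h)
  case (Suc n)
  have "iterated_mean m n (\<lambda>ts. c * h (t # ts)) = c * iterated_mean m n (\<lambda>ts. h (t # ts))" for t
    using Suc.IH[OF bounded_fun_comp[OF Suc.prems]] .
  then show ?case
    using mean_scale[OF bounded_fun_iterated_mean_Cons[OF Suc.prems]] by simp
qed simp

lemma iterated_mean_diff:
  assumes "bounded_fun h" and "bounded_fun g"
  shows "iterated_mean m n (\<lambda>ts. h ts - g ts) = iterated_mean m n h - iterated_mean m n g"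
  using iterated_mean_add[OF assms(1) bounded_fun_scale[OF assms(2)], of n "-1"]
    iterated_mean_scale[OF assms(2), of n "-1"]
  by simp

lemma iterated_mean_sum:
  "finite I \<Longrightarrow> (\<And>i. i \<in> I \<Longrightarrow> bounded_fun (g i)) \<Longrightarrow>
    iterated_mean m n (\<lambda>ts. \<Sum>i\<in>I. g i ts) = (\<Sum>i\<in>I. iterated_mean m n (g i))"
proof (induction I rule: finite_induct)
  case (insert j I)
  have "bounded_fun (\<lambda>ts. \<Sum>i\<in>I. g i ts)"
    using insert.prems by (intro bounded_fun_sum) simp
  then show ?case
    using insert iterated_mean_add[of "g j" "\<lambda>ts. \<Sum>i\<in>I. g i ts" n] by simp
qed (simp add: iterated_mean_const)

text \<open>The deleted coordinate is averaged out as a constant, and the translations are absorbed by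
  the invariance of the mean.\<close>

lemma iterated_mean_delete_translate:
  "i \<le> n \<Longrightarrow> length cs = i \<Longrightarrow> bounded_fun h \<Longrightarrow>
    iterated_mean m (Suc n) (\<lambda>ts. h (map2 (+) (take i ts) cs @ drop (Suc i) ts)) = iterated_mean m n h"
proof (induction i arbitrary: n cs h)
  case 0
  then show ?case by (simp add: mean_const)
next
  case (Suc i)
  obtain c cs' where cs: "cs = c # cs'" and cs': "length cs' = i"
    using Suc.prems(2) by (cases cs) auto
  obtain n' where n: "n = Suc n'"
    using Suc.prems(1) by (cases n) auto
  have IH: "iterated_mean m (Suc n') (\<lambda>ts. (\<lambda>l. h ((t + c) # l)) (map2 (+) (take i ts) cs' @ drop (Suc i) ts))
      = iterated_mean m n' (\<lambda>l. h ((t + c) # l))" for t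
    by (rule Suc.IH) (use Suc.prems n cs' bounded_fun_comp[OF Suc.prems(3)] in auto)
  have "iterated_mean m (Suc n) (\<lambda>ts. h (map2 (+) (take (Suc i) ts) cs @ drop (Suc (Suc i)) ts))
      = m (\<lambda>t. iterated_mean m (Suc n') (\<lambda>ts. h ((t + c) # map2 (+) (take i ts) cs' @ drop (Suc i) ts)))"
    by (simp add: n cs)
  also have "\<dots> = m (\<lambda>t. iterated_mean m n' (\<lambda>ts. h ((t + c) # ts)))"
    using IH by simp
  also have "\<dots> = iterated_mean m n h"
    using mean_translate[OF bounded_fun_iterated_mean_Cons[OF Suc.prems(3)], of n' c] by (simp add: n)
  finally show ?case .
qed

lemma fibre_mean_Cb:
  assumes "f \<in> Cb n"
  shows "fibre_mean m n f \<in> Cb n"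
proof -
  obtain B where "\<And>ys. \<bar>f ys\<bar> \<le> B"
    using Cb_bounded_fun[OF assms] unfolding bounded_fun_def by blast
  then have "\<bar>fibre_mean m n f xs\<bar> \<le> B" for xs
    using order_trans[OF abs_ge_zero] unfolding fibre_mean_def by (auto intro: iterated_mean_abs_le)
  moreover have "fibre_mean m n f xs = 0" if "length xs \<noteq> n" for xs
    using that by (simp add: fibre_mean_def)
  ultimately show ?thesis
    unfolding Cb_def by blast
qed

lemma fibre_mean_add:
  "f \<in> Cb n \<Longrightarrow> g \<in> Cb n \<Longrightarrow>
    fibre_mean m n (\<lambda>es. f es + g es) = (\<lambda>xs. fibre_mean m n f xs + fibre_mean m n g xs)"
  unfolding fibre_mean_def
  by (intro ext) (simp add: iterated_mean_add bounded_fun_comp Cb_bounded_fun)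

lemma fibre_mean_scale:
  "f \<in> Cb n \<Longrightarrow> fibre_mean m n (\<lambda>es. c * f es) = (\<lambda>xs. c * fibre_mean m n f xs)"
  unfolding fibre_mean_def
  by (intro ext) (simp add: iterated_mean_scale bounded_fun_comp Cb_bounded_fun)

lemma fibre_mean_pib:
  assumes "f \<in> Cb n"
  shows "fibre_mean m n (pib n f) = f"
proof
  fix xs
  show "fibre_mean m n (pib n f) xs = f xs"
  proof (cases "length xs = n")
    case True
    then have "iterated_mean m n (\<lambda>ts. f (map fst (zip xs ts))) = iterated_mean m n (\<lambda>_. f xs)"
      by (intro iterated_mean_cong) simp
    then show ?thesis
      using True by (simp add: fibre_mean_def pib_def iterated_mean_const)
  next
    case False
    then show ?thesis
      using assms by (simp add: fibre_mean_def Cb_def)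
  qed
qed

lemma fibre_mean_supnorm:
  fixes f :: "('x \<times> 'a) list \<Rightarrow> real"
  assumes "f \<in> Cb n"
  shows "supnorm n (fibre_mean m n f) \<le> supnorm n f"
  unfolding supnorm_def[of n "fibre_mean m n f"]
proof (rule cSUP_least)
  show "{xs :: 'x list. length xs = n} \<noteq> {}"
    by (auto intro: exI[of _ "replicate n undefined"])
  fix xs :: "'x list"
  show "\<bar>fibre_mean m n f xs\<bar> \<le> supnorm n f"
    using Cb_abs_le_supnorm[OF assms] Cb_abs_le_supnorm[OF assms, of "[]"]
    unfolding fibre_mean_def by (auto intro: iterated_mean_abs_le order_trans[OF abs_ge_zero])
qed

lemma iterated_mean_face_delete:
  assumes f: "f \<in> Cb n" and xs: "length xs = Suc n" and i: "i \<le> n"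
  shows "iterated_mean m (Suc n) (\<lambda>ts. f (take i (zip xs ts) @ drop (Suc i) (zip xs ts)))
       = fibre_mean m n f (take i xs @ drop (Suc i) xs)"
proof -
  let ?ys = "take i xs @ drop (Suc i) xs"
  have "iterated_mean m (Suc n) (\<lambda>ts. f (take i (zip xs ts) @ drop (Suc i) (zip xs ts)))
      = iterated_mean m (Suc n)
          (\<lambda>ts. (\<lambda>us. f (zip ?ys us)) (map2 (+) (take i ts) (replicate i 0) @ drop (Suc i) ts))"
    by (rule iterated_mean_cong) (simp add: zip_face_delete[OF xs _ i])
  also have "\<dots> = iterated_mean m n (\<lambda>us. f (zip ?ys us))"
    using i bounded_fun_comp[OF Cb_bounded_fun[OF f]] by (intro iterated_mean_delete_translate) simp_all
  also have "\<dots> = fibre_mean m n f ?ys"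
    using xs i by (simp add: fibre_mean_def)
  finally show ?thesis .
qed

lemma iterated_mean_face_act:
  assumes f: "f \<in> Cb n" and xs: "length xs = Suc n" and i: "i \<le> n"
  shows "iterated_mean m (Suc n)
          (\<lambda>ts. f (map (\<lambda>y. ext_op q \<phi> y (zip xs ts ! i)) (take i (zip xs ts)) @ drop (Suc i) (zip xs ts)))
       = fibre_mean m n f (map (\<lambda>y. q y (xs ! i)) (take i xs) @ drop (Suc i) xs)"
proof -
  let ?ys = "map (\<lambda>y. q y (xs ! i)) (take i xs) @ drop (Suc i) xs"
  let ?cs = "map (\<lambda>x. \<phi> x (xs ! i)) (take i xs)"
  have "iterated_mean m (Suc n)
          (\<lambda>ts. f (map (\<lambda>y. ext_op q \<phi> y (zip xs ts ! i)) (take i (zip xs ts)) @ drop (Suc i) (zip xs ts)))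
      = iterated_mean m (Suc n) (\<lambda>ts. (\<lambda>us. f (zip ?ys us)) (map2 (+) (take i ts) ?cs @ drop (Suc i) ts))"
    by (rule iterated_mean_cong) (simp add: zip_face_act[OF xs _ i])
  also have "\<dots> = iterated_mean m n (\<lambda>us. f (zip ?ys us))"
    using i xs bounded_fun_comp[OF Cb_bounded_fun[OF f]] by (intro iterated_mean_delete_translate) simp_all
  also have "\<dots> = fibre_mean m n f ?ys"
    using xs i by (simp add: fibre_mean_def)
  finally show ?thesis .
qed

lemma fibre_mean_cob:
  fixes f :: "('x \<times> 'a) list \<Rightarrow> real"
  assumes f: "f \<in> Cb n"
  shows "cob q n (fibre_mean m n f) = fibre_mean m (Suc n) (cob (ext_op q \<phi>) n f)"
proof
  fix xs :: "'x list"
  show "cob q n (fibre_mean m n f) xs = fibre_mean m (Suc n) (cob (ext_op q \<phi>) n f) xs"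
  proof (cases "length xs = Suc n")
    case False
    then show ?thesis by (simp add: cob_def fibre_mean_def)
  next
    case xs: True
    define delete where "delete i ts = f (take i (zip xs ts) @ drop (Suc i) (zip xs ts))"
      for i and ts :: "'a list"
    define act where
      "act i ts = f (map (\<lambda>y. ext_op q \<phi> y (zip xs ts ! i)) (take i (zip xs ts)) @ drop (Suc i) (zip xs ts))"
      for i and ts :: "'a list"
    have bounded: "bounded_fun (delete i)" "bounded_fun (act i)" for i
      unfolding delete_def act_def by (rule bounded_fun_comp[OF Cb_bounded_fun[OF f]])+
    have "fibre_mean m (Suc n) (cob (ext_op q \<phi>) n f) xs
        = iterated_mean m (Suc n) (\<lambda>ts. \<Sum>i\<in>{1..n}. (-1) ^ Suc i * (delete i ts - act i ts))"
      unfolding fibre_mean_def if_P[OF xs]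
      by (rule iterated_mean_cong) (simp add: cob_def delete_def act_def xs)
    also have "\<dots> = (\<Sum>i\<in>{1..n}. iterated_mean m (Suc n) (\<lambda>ts. (-1) ^ Suc i * (delete i ts - act i ts)))"
      using bounded by (intro iterated_mean_sum finite_atLeastAtMost bounded_fun_scale bounded_fun_diff)
    also have "\<dots> = (\<Sum>i\<in>{1..n}. (-1) ^ Suc i *
        (iterated_mean m (Suc n) (delete i) - iterated_mean m (Suc n) (act i)))"
      using bounded by (simp only: iterated_mean_scale[OF bounded_fun_diff] iterated_mean_diff)
    also have "\<dots> = (\<Sum>i\<in>{1..n}. (-1) ^ Suc i *
        (fibre_mean m n f (take i xs @ drop (Suc i) xs)
         - fibre_mean m n f (map (\<lambda>y. q y (xs ! i)) (take i xs) @ drop (Suc i) xs)))"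
      unfolding delete_def act_def
      by (intro sum.cong refl) (simp del: iterated_mean.simps
          add: iterated_mean_face_delete[OF f xs] iterated_mean_face_act[OF f xs])
    also have "\<dots> = cob q n (fibre_mean m n f) xs"
      using xs by (simp add: cob_def)
    finally show ?thesis ..
  qed
qed

lemma fibre_mean_Bb:
  assumes "h \<in> Bb (ext_op q \<phi>) n"
  shows "fibre_mean m n h \<in> Bb q n"
proof (cases n)
  case 0
  then show ?thesis
    using assms by (simp add: Bb_def fibre_mean_def fun_eq_iff)
next
  case (Suc k)
  then obtain h' where h': "h' \<in> Cb k" and h: "h = cob (ext_op q \<phi>) k h'"
    using assms by (auto simp: Bb_def)
  have "fibre_mean m n h = cob q k (fibre_mean m k h')"
    using fibre_mean_cob[OF h'] by (simp add: Suc h)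
  then show ?thesis
    unfolding Bb_def Suc nat.case using fibre_mean_Cb[OF h'] by (rule image_eqI)
qed

lemma cohomologous_of_pullbacks:
  fixes q :: "'x \<Rightarrow> 'x \<Rightarrow> 'x" and \<phi> :: "'x \<Rightarrow> 'x \<Rightarrow> 'a"
  assumes f: "f \<in> Cb n" and g: "g \<in> Cb n"
    and coh: "cohomologous (ext_op q \<phi>) n (pib n f :: ('x \<times> 'a) list \<Rightarrow> real) (pib n g)"
  shows "cohomologous q n f g"
proof -
  have "(\<lambda>xs. f xs - g xs) = fibre_mean m n (pib n (\<lambda>xs. f xs - g xs))"
    using fibre_mean_pib[OF Cb_diff[OF f g]] by simp
  also have "pib n (\<lambda>xs. f xs - g xs) = (\<lambda>es. pib n f es - pib n g es)"
    by (simp add: pib_def)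
  finally show ?thesis
    using fibre_mean_Bb[of _ q \<phi> n] coh unfolding cohomologous_def by metis
qed

end

theorem mainTheorem18:
  fixes q :: "'x \<Rightarrow> 'x \<Rightarrow> 'x" and \<phi> :: "'x \<Rightarrow> 'x \<Rightarrow> 'a::ab_group_add"
  assumes "quandle q" and "quandle_2cocycle q \<phi>"
  shows "(\<exists>\<kappa> :: nat \<Rightarrow> (('x \<times> 'a) list \<Rightarrow> real) \<Rightarrow> ('x list \<Rightarrow> real).
            (\<forall>n. \<forall>f\<in>Cb n. \<kappa> n f \<in> Cb n)
          \<and> (\<forall>n. \<forall>f\<in>Cb n. \<forall>g\<in>Cb n. \<kappa> n (\<lambda>es. f es + g es) = (\<lambda>xs. \<kappa> n f xs + \<kappa> n g xs))
          \<and> (\<forall>n c. \<forall>f\<in>Cb n. \<kappa> n (\<lambda>es. c * f es) = (\<lambda>xs. c * \<kappa> n f xs))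
          \<and> (\<forall>n. \<forall>f\<in>Cb n. cob q n (\<kappa> n f) = \<kappa> (Suc n) (cob (ext_op q \<phi>) n f))
          \<and> (\<forall>n\<ge>1. \<forall>f\<in>Cb n. supnorm n (\<kappa> n f) \<le> supnorm n f)
          \<and> (\<forall>n\<ge>1. \<forall>f\<in>Cb n. \<kappa> n (pib n f) = f))
       \<and> (\<forall>n\<ge>1. \<forall>f\<in>Zb q n. \<forall>g\<in>Zb q n.
            cohomologous (ext_op q \<phi>) n (pib n f) (pib n g) \<longrightarrow> cohomologous q n f g)"
proof -
  obtain m :: "('a \<Rightarrow> real) \<Rightarrow> real" where "invariant_mean m"
    using invariant_mean_exists by blast
  then interpret invariant_mean m .
  show ?thesis
    using fibre_mean_Cb fibre_mean_add fibre_mean_scale fibre_mean_cob[of _ _ q \<phi>]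
      fibre_mean_supnorm fibre_mean_pib cohomologous_of_pullbacks[of _ _ _ q \<phi>]
    unfolding Zb_def by (intro conjI exI[of _ "fibre_mean m"]) blast+
qed

end
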